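(* Fix a strategy $\mathcal{G}$ for the partial feedback game and let $H$ be the random complete history when $\pi\sim\mathcal{S}_{m,n}$ is uniform. Let $0<\varepsilon\le \frac14$. For any card type $i$, if $n$ is sufficiently large in terms of $\varepsilon$ and $m$, then \[\Pr\Big[Y_i(H) > (1+4\varepsilon)\frac{b_i(H)}{n} + \varepsilon^2 m\Big] \le c' \varepsilon^{-2} e^{-c \varepsilon^4 m}\] for some constants $c,c'>0$ depending only on $\varepsilon$.
   Context: $\mathcal{S}_{m,n}$ is the set of words over $[n]$ in which each symbol appears exactly $m$ times (a deck of $mn$ cards). In the partial feedback game the guesser makes guesses $g_1,\dots,g_{mn}\in[n]$ sequentially; after guess $g_t$ they learn only $y_t\in\{0,1\}$, where $y_t=1$ iff $\pi_t=g_t$. A strategy chooses $g_t$ as a function of $(g_1,\dots,g_{t-1},y_1,\dots,y_{t-1})$. A history up to time $s$ is $h_s=((g_r)_{r\le s},(y_r)_{r\le s})$, $H_s$ is the random history up to time $s$, and $H=H_{mn}$. For a history $h_s$, $a_i(h_s)=|\{r\le s:g_r=i\}|$. The $t$-th guess, with $g_t=i$, is called critical if $\varepsilon mn\le a_i(H_{t-1})<(1-\varepsilon)mn$. $b_i(H)$ is the number of critical guesses with $g_t=i$, and $Y_i(H)$ is the number of those that are correct. *)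

theory Defs
  imports "HOL-Probability.Probability"
begin

text \<open>Card types are 0,...,n-1 (standing for [n]). A deck in S_{m,n} is a word of
length m*n over {0..<n} in which every symbol occurs exactly m times.\<close>
definition decks :: "nat \<Rightarrow> nat \<Rightarrow> nat list set" where
  "decks m n = {\<pi>. length \<pi> = m * n \<and> set \<pi> \<subseteq> {..<n} \<and> (\<forall>i<n. count_list \<pi> i = m)}"

text \<open>A history is the list of pairs (g_r, y_r), with y_r = True iff the r-th guess was correct.
A strategy maps the history so far to the next guess.\<close>
type_synonym history = "(nat \<times> bool) list"
type_synonym strategy = "history \<Rightarrow> nat"

fun hist :: "strategy \<Rightarrow> nat list \<Rightarrow> nat \<Rightarrow> history" where
  "hist G \<pi> 0 = []"
| "hist G \<pi> (Suc t) =
     (let h = hist G \<pi> t; g = G h in h @ [(g, g = \<pi> ! t)])"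

definition full_hist :: "strategy \<Rightarrow> nat \<Rightarrow> nat \<Rightarrow> nat list \<Rightarrow> history" where
  "full_hist G m n \<pi> = hist G \<pi> (m * n)"

definition guess_count :: "nat \<Rightarrow> history \<Rightarrow> nat" where
  "guess_count i h = length (filter (\<lambda>(g, y). g = i) h)"

text \<open>The (t+1)-th guess (0-based index t) of H, equal to i, is critical if
  \<epsilon> m n \<le> a_i(H_t) < (1-\<epsilon>) m n.\<close>
definition critical :: "real \<Rightarrow> nat \<Rightarrow> nat \<Rightarrow> nat \<Rightarrow> history \<Rightarrow> nat \<Rightarrow> bool" where
  "critical \<epsilon> m n i H t \<longleftrightarrow> t < length H \<and> fst (H ! t) = i \<and>
     \<epsilon> * real m * real n \<le> real (guess_count i (take t H)) \<and>
     real (guess_count i (take t H)) < (1 - \<epsilon>) * real m * real n"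

definition b_crit :: "real \<Rightarrow> nat \<Rightarrow> nat \<Rightarrow> nat \<Rightarrow> history \<Rightarrow> nat" where
  "b_crit \<epsilon> m n i H = card {t. critical \<epsilon> m n i H t}"

definition Y_crit :: "real \<Rightarrow> nat \<Rightarrow> nat \<Rightarrow> nat \<Rightarrow> history \<Rightarrow> nat" where
  "Y_crit \<epsilon> m n i H = card {t. critical \<epsilon> m n i H t \<and> snd (H ! t)}"

end

(*
  Given the history h of the first t guesses, the next card equals a guess g with
  probability at most D_g(h) = (m - k_g) / U_g, where k_g is the number of correct
  guesses of g so far and U_g the number of positions that can still hold a copy
  of g; this follows by swapping the next card with such positions.

  The number of correct guesses plus the worst-case hit
  probabilities m / (mn - s) of the remaining steps shows that there are at most
  m H_(mn) correct guesses on average. For card type i, while a_i lies in the critical window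
  and at most eps^2 mn / 8 cards of other types have been hit,
  exp (- theta (change of D_i) - theta^2 beta (number of guesses of i)) is a
  supermartingale. If Y_i > (1 + 4 eps) b_i / n + eps^2 m, then either more than
  eps^2 mn / 8 cards of other types were hit, or D_i falls by eps^2 / (2n) across
  the critical window and the exponential supermartingale exceeds exp (eps^7 m / 1024).
  Markov's inequality bounds both events.
*)

theory Submission
  imports Defs "HOL-Analysis.Harmonic_Numbers"
begin

lemma card_filter_add_card_filter_not:
  "finite A \<Longrightarrow> card {x \<in> A. P x} + card {x \<in> A. \<not> P x} = card A"
  by (subst card_Un_disjoint[symmetric]) (auto intro: arg_cong[where f = card])

lemma length_filter_take_mono:
  assumes "s \<le> s'"
  shows "length (filter P (take s xs)) \<le> length (filter P (take s' xs))"
proof -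
  have "take s' xs = take s xs @ drop s (take s' xs)"
    using assms by (metis append_take_drop_id min.absorb1 take_take)
  then show ?thesis
    by (metis filter_append length_append le_add1)
qed

lemma length_filter_take_Suc_le:
  "length (filter P (take (Suc s) xs)) \<le> length (filter P (take s xs)) + 1"
  by (cases "s < length xs") (simp_all add: take_Suc_conv_app_nth)

lemma length_filter_take_eq_card:
  "k \<le> length xs \<Longrightarrow> length (filter P (take k xs)) = card {r. r < k \<and> P (xs ! r)}"
  by (simp add: length_filter_conv_card min.absorb2 cong: conj_cong)

lemma card_filter_interval:
  assumes "lo \<le> Suc hi" "hi < length xs"
  shows "card {s \<in> {lo..hi}. P (xs ! s)} + length (filter P (take lo xs))
       = length (filter P (take (Suc hi) xs))"
proof -
  have "{r. r < Suc hi \<and> P (xs ! r)} = {s \<in> {lo..hi}. P (xs ! s)} \<union> {r. r < lo \<and> P (xs ! r)}"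
    using assms(1) by auto
  moreover have "card ({s \<in> {lo..hi}. P (xs ! s)} \<union> {r. r < lo \<and> P (xs ! r)})
      = card {s \<in> {lo..hi}. P (xs ! s)} + card {r. r < lo \<and> P (xs ! r)}"
    by (rule card_Un_disjoint) auto
  ultimately show ?thesis
    using assms by (simp add: length_filter_take_eq_card)
qed

lemma mono_window_eq_interval:
  fixes f :: "nat \<Rightarrow> 'a :: linorder"
  assumes "mono f" and J: "J = {s. s < L \<and> a \<le> f s \<and> f s < b}" "J \<noteq> {}"
  shows "J = {Min J..Max J}"
proof
  have fin: "finite J"
    using J by simp
  then show "J \<subseteq> {Min J..Max J}"
    by auto
  show "{Min J..Max J} \<subseteq> J"
  proof
    fix s assume s: "s \<in> {Min J..Max J}"
    have "Min J \<in> J" "Max J \<in> J"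
      using fin J(2) by simp_all
    moreover have "f (Min J) \<le> f s" "f s \<le> f (Max J)"
      using s \<open>mono f\<close> by (auto dest: monoD)
    ultimately show "s \<in> J"
      using s J(1) by auto
  qed
qed

definition swap_at :: "nat \<Rightarrow> nat \<Rightarrow> 'a list \<Rightarrow> 'a list" where
  "swap_at s t xs = xs[s := xs ! t, t := xs ! s]"

lemma length_swap_at [simp]: "length (swap_at s t xs) = length xs"
  by (simp add: swap_at_def)

lemma nth_swap_at:
  assumes "s < length xs" "t < length xs"
  shows "swap_at s t xs ! r = (if r = t then xs ! s else if r = s then xs ! t else xs ! r)"
  using assms by (cases "r < length xs") (auto simp: swap_at_def nth_list_update)

lemma swap_at_swap_at:
  assumes "s < length xs" "t < length xs"
  shows "swap_at s t (swap_at s t xs) = xs"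
  using assms by (intro nth_equalityI) (auto simp: nth_swap_at)

lemma weighted_pair_le:
  fixes a b p x y z :: real
  assumes "0 \<le> a" "0 \<le> b" "a \<le> (a + b) * p" "y \<le> z" "y + p * (x - y) \<le> z"
  shows "a * x + b * y \<le> (a + b) * z"
proof (cases "y \<le> x")
  case True
  then have "a * (x - y) \<le> (a + b) * p * (x - y)"
    using assms(3) by (intro mult_right_mono) auto
  then have "a * x + b * y \<le> (a + b) * (y + p * (x - y))"
    by (simp add: algebra_simps)
  also have "\<dots> \<le> (a + b) * z"
    using assms by (intro mult_left_mono) auto
  finally show ?thesis .
next
  case False
  then have "a * x + b * y \<le> (a + b) * y"
    using assms(1) by (simp add: algebra_simps mult_left_mono)
  also have "\<dots> \<le> (a + b) * z"
    using assms by (intro mult_left_mono) auto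
  finally show ?thesis .
qed

lemma exp_neg_le: "0 \<le> x \<Longrightarrow> exp (- x) \<le> 1 - x + x\<^sup>2" for x :: real
proof -
  assume x: "0 \<le> x"
  have "exp (- x) = 1 / exp x"
    by (simp add: exp_minus field_simps)
  also have "\<dots> \<le> 1 / (1 + x)"
    using x by (intro divide_left_mono) (auto intro: add_pos_nonneg)
  also have "\<dots> \<le> 1 - x + x\<^sup>2"
    using x by (simp add: field_simps power2_eq_square power3_eq_cube)
  finally show ?thesis .
qed

lemma exp_two_point_le:
  fixes q x y :: real
  assumes q: "0 \<le> q" "q \<le> 1" and x: "0 \<le> x" "x \<le> 1" and y: "0 \<le> y" "y \<le> 1"
    and mean_zero: "q * y = (1 - q) * x"
  shows "(1 - q) * exp (- x) + q * exp y \<le> exp ((1 - q) * x\<^sup>2 + q * y\<^sup>2)"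
proof -
  have "(1 - q) * exp (- x) + q * exp y \<le> (1 - q) * (1 - x + x\<^sup>2) + q * (1 + y + y\<^sup>2)"
    using q x y exp_neg_le[of x] exp_bound[of y] by (intro add_mono mult_left_mono) auto
  also have "\<dots> = 1 + ((1 - q) * x\<^sup>2 + q * y\<^sup>2)"
    using mean_zero by (simp add: algebra_simps)
  also have "\<dots> \<le> exp ((1 - q) * x\<^sup>2 + q * y\<^sup>2)"
    by (rule exp_ge_add_one_self)
  finally show ?thesis .
qed

lemma sum_inverse_diff_eq_harm: "(\<Sum>s<N. 1 / (real N - real s)) = harm N"
proof (induction N)
  case (Suc N)
  have "(\<Sum>s<Suc N. 1 / (real (Suc N) - real s))
      = 1 / real (Suc N) + (\<Sum>s<N. 1 / (real (Suc N) - real (Suc s)))"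
    by (subst sum.lessThan_Suc_shift) simp
  then show ?case
    using Suc by (simp add: harm_Suc inverse_eq_divide)
qed (simp add: harm_def)

section \<open>Histories and decks\<close>

lemma length_hist [simp]: "length (hist G \<pi> t) = t"
  by (induction t) (simp_all add: Let_def)

lemma hist_Suc_snoc [simp]:
  "hist G \<pi> (Suc t) = hist G \<pi> t @ [(G (hist G \<pi> t), G (hist G \<pi> t) = \<pi> ! t)]"
  by (simp add: Let_def)

declare hist.simps(2) [simp del]

lemma take_hist: "r \<le> t \<Longrightarrow> take r (hist G \<pi> t) = hist G \<pi> r"
  by (induction t) (auto simp: le_Suc_eq)

lemma nth_hist: "r < t \<Longrightarrow> hist G \<pi> t ! r = (G (hist G \<pi> r), G (hist G \<pi> r) = \<pi> ! r)"
proof -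
  assume "r < t"
  then have "hist G \<pi> t ! r = hist G \<pi> (Suc r) ! r"
    by (metis take_hist Suc_leI lessI nth_take)
  then show ?thesis by (simp add: nth_append)
qed

lemma hist_cong:
  assumes "\<And>r. r < t \<Longrightarrow> (G (hist G \<pi> r) = \<pi> ! r) = (G (hist G \<pi> r) = \<sigma> ! r)"
  shows "hist G \<sigma> t = hist G \<pi> t"
  using assms by (induction t) auto

lemma decks_length: "\<sigma> \<in> decks m n \<Longrightarrow> length \<sigma> = m * n"
  by (simp add: decks_def)

lemma decks_nth_less: "\<sigma> \<in> decks m n \<Longrightarrow> s < m * n \<Longrightarrow> \<sigma> ! s < n"
proof -
  assume "\<sigma> \<in> decks m n" "s < m * n"
  then have "\<sigma> ! s \<in> set \<sigma>" "set \<sigma> \<subseteq> {..<n}" by (simp_all add: decks_def)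
  then show ?thesis by blast
qed

lemma card_positions_decks:
  assumes "\<sigma> \<in> decks m n"
  shows "card {s. s < m * n \<and> \<sigma> ! s = g} = (if g < n then m else 0)"
proof -
  have "count_list \<sigma> g = card {s. s < length \<sigma> \<and> \<sigma> ! s = g}"
    by (simp add: count_list_eq_length_filter length_filter_conv_card eq_commute)
  then have "card {s. s < m * n \<and> \<sigma> ! s = g} = count_list \<sigma> g"
    using assms by (simp add: decks_length)
  also have "\<dots> = (if g < n then m else 0)"
    using assms by (auto simp: decks_def count_list_0_iff)
  finally show ?thesis .
qed

lemma finite_decks: "finite (decks m n)"
proof (rule finite_subset)
  show "decks m n \<subseteq> {xs. set xs \<subseteq> {..<n} \<and> length xs = m * n}"
    by (auto simp: decks_def)
qed (simp add: finite_lists_length_eq)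

lemma decks_nonempty: "decks m n \<noteq> {}"
proof (induction n)
  case 0
  have "[] \<in> decks m 0" by (simp add: decks_def)
  then show ?case by auto
next
  case (Suc n)
  then obtain \<pi> where \<pi>: "\<pi> \<in> decks m n" by auto
  then have "count_list \<pi> n = 0"
    by (auto simp: decks_def count_list_0_iff)
  then have "\<pi> @ replicate m n \<in> decks m (Suc n)"
    using \<pi> by (auto simp: decks_def less_Suc_eq count_list_eq_length_filter filter_replicate)
  then show ?case by auto
qed

lemma swap_at_in_decks:
  assumes "\<sigma> \<in> decks m n" "s < m * n" "t < m * n"
  shows "swap_at s t \<sigma> \<in> decks m n"
proof -
  have mset_eq: "mset (swap_at s t \<sigma>) = mset \<sigma>"
    using assms mset_swap[of t \<sigma> s] by (simp add: swap_at_def decks_length)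
  then have "set (swap_at s t \<sigma>) = set \<sigma>"
    by (metis set_mset_mset)
  moreover have "count_list (swap_at s t \<sigma>) = count_list \<sigma>"
    using mset_eq by (simp add: fun_eq_iff flip: count_mset)
  ultimately show ?thesis
    using assms by (simp add: decks_def)
qed

definition consistent_decks :: "nat \<Rightarrow> nat \<Rightarrow> strategy \<Rightarrow> history \<Rightarrow> nat list set" where
  "consistent_decks m n G h = {\<sigma> \<in> decks m n. hist G \<sigma> (length h) = h}"

definition hits :: "nat \<Rightarrow> history \<Rightarrow> nat" where
  "hits g h = length (filter (\<lambda>x. x = (g, True)) h)"

definition other_hits :: "nat \<Rightarrow> history \<Rightarrow> nat" where
  "other_hits g h = length (filter (\<lambda>(g', y). y \<and> g' \<noteq> g) h)"

text \<open>Given \<open>h\<close>, a copy of \<open>g\<close> can still lie at any later position and at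
  any earlier position where another card type was guessed wrongly; \<open>open_slots\<close>
  counts these positions (\<open>card_open_positions\<close>).\<close>

definition open_positions :: "nat \<Rightarrow> nat \<Rightarrow> nat \<Rightarrow> history \<Rightarrow> nat set" where
  "open_positions m n g h =
     {s. s < m * n \<and> (length h \<le> s \<or> (\<not> snd (h ! s) \<and> fst (h ! s) \<noteq> g))}"

definition open_slots :: "nat \<Rightarrow> nat \<Rightarrow> nat \<Rightarrow> history \<Rightarrow> real" where
  "open_slots m n g h = real (m * n) - real (guess_count g h) - real (other_hits g h)"

definition remaining_density :: "nat \<Rightarrow> nat \<Rightarrow> nat \<Rightarrow> history \<Rightarrow> real" where
  "remaining_density m n g h = (real m - real (hits g h)) / open_slots m n g h"

lemma finite_open_positions [simp]: "finite (open_positions m n g h)"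
  by (simp add: open_positions_def)

lemma guess_count_snoc [simp]:
  "guess_count g (h @ [x]) = guess_count g h + (if fst x = g then 1 else 0)"
  by (simp add: guess_count_def split_beta)

lemma hits_snoc [simp]: "hits g (h @ [x]) = hits g h + (if x = (g, True) then 1 else 0)"
  by (simp add: hits_def)

lemma other_hits_snoc [simp]:
  "other_hits g (h @ [x]) = other_hits g h + (if snd x \<and> fst x \<noteq> g then 1 else 0)"
  by (simp add: other_hits_def split_beta)

lemma guess_count_add_other_hits_le: "guess_count g h + other_hits g h \<le> length h"
  by (induction h rule: rev_induct) (auto simp: guess_count_def other_hits_def)

lemma other_hits_le_correct: "other_hits g h \<le> length (filter snd h)"
  by (induction h rule: rev_induct) (auto simp: other_hits_def)

lemma open_slots_ge: "real (m * n) - real (length h) \<le> open_slots m n g h"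
  using guess_count_add_other_hits_le[of g h] unfolding open_slots_def by linarith

lemma hits_le:
  assumes "\<sigma> \<in> consistent_decks m n G h" "length h \<le> m * n"
  shows "hits g h \<le> m"
proof -
  have "hits g h = card {r. r < length h \<and> h ! r = (g, True)}"
    by (simp add: hits_def length_filter_conv_card)
  also have "\<dots> \<le> card {s. s < m * n \<and> \<sigma> ! s = g}"
    using assms nth_hist[of _ "length h" G \<sigma>]
    by (intro card_mono) (auto simp: consistent_decks_def)
  also have "\<dots> \<le> m"
    using assms card_positions_decks[of \<sigma> m n g] by (simp add: consistent_decks_def)
  finally show ?thesis .
qed

lemma card_open_positions:
  assumes "length h \<le> m * n"
  shows "real (card (open_positions m n g h)) = open_slots m n g h"
proof -
  let ?O = "open_positions m n g h"
  let ?A = "{r. r < length h \<and> fst (h ! r) = g}"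
  let ?R = "{r. r < length h \<and> snd (h ! r) \<and> fst (h ! r) \<noteq> g}"
  have "{..<m * n} = ?O \<union> ?A \<union> ?R"
    using assms by (auto simp: open_positions_def)
  moreover have "card (?O \<union> ?A \<union> ?R) = card (?O \<union> ?A) + card ?R"
    by (rule card_Un_disjoint) (auto simp: open_positions_def)
  moreover have "card (?O \<union> ?A) = card ?O + card ?A"
    by (rule card_Un_disjoint) (auto simp: open_positions_def)
  ultimately have "card {..<m * n} = card ?O + card ?A + card ?R"
    by simp
  moreover have "guess_count g h = card ?A" "other_hits g h = card ?R"
    by (simp_all add: guess_count_def other_hits_def length_filter_conv_card split_beta)
  ultimately show ?thesis
    by (simp add: open_slots_def)
qed

lemma card_open_occurrences_add_hits:
  assumes \<sigma>: "\<sigma> \<in> consistent_decks m n G h" and len: "length h \<le> m * n"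
  shows "card {s \<in> open_positions m n g h. \<sigma> ! s = g} + hits g h = card {s. s < m * n \<and> \<sigma> ! s = g}"
proof -
  let ?K = "{r. r < length h \<and> h ! r = (g, True)}"
  have h_nth: "h ! r = (G (hist G \<sigma> r), G (hist G \<sigma> r) = \<sigma> ! r)" if "r < length h" for r
    using nth_hist[OF that, of G \<sigma>] \<sigma> by (simp add: consistent_decks_def)
  have "{s. s < m * n \<and> \<sigma> ! s = g} = {s \<in> open_positions m n g h. \<sigma> ! s = g} \<union> ?K"
    using len h_nth by (auto simp: open_positions_def)
  moreover have "card ({s \<in> open_positions m n g h. \<sigma> ! s = g} \<union> ?K)
      = card {s \<in> open_positions m n g h. \<sigma> ! s = g} + card ?K"
    by (rule card_Un_disjoint) (auto simp: open_positions_def)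
  moreover have "hits g h = card ?K"
    by (simp add: hits_def length_filter_conv_card)
  ultimately show ?thesis by simp
qed

lemma swap_at_consistent:
  assumes \<sigma>: "\<sigma> \<in> consistent_decks m n G h" and len: "length h < m * n"
    and s: "s \<in> open_positions m n g h" and \<sigma>_t: "\<sigma> ! length h = g"
  shows "swap_at s (length h) \<sigma> \<in> consistent_decks m n G h"
proof -
  let ?\<tau> = "swap_at s (length h) \<sigma>"
  have lens: "s < length \<sigma>" "length h < length \<sigma>"
    using \<sigma> s len by (auto simp: consistent_decks_def open_positions_def decks_length)
  have "hist G ?\<tau> (length h) = hist G \<sigma> (length h)"
  proof (rule hist_cong)
    fix r assume r: "r < length h"
    then have "h ! r = (G (hist G \<sigma> r), G (hist G \<sigma> r) = \<sigma> ! r)"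
      using nth_hist[OF r, of G \<sigma>] \<sigma> by (simp add: consistent_decks_def)
    moreover have "\<not> snd (h ! s) \<and> fst (h ! s) \<noteq> g" if "r = s"
      using s r that by (auto simp: open_positions_def)
    ultimately show "(G (hist G \<sigma> r) = \<sigma> ! r) = (G (hist G \<sigma> r) = ?\<tau> ! r)"
      using r lens \<sigma>_t by (auto simp: nth_swap_at)
  qed
  then show ?thesis
    using \<sigma> s len swap_at_in_decks[of \<sigma> m n s "length h"]
    by (simp add: consistent_decks_def open_positions_def)
qed

section \<open>The posterior bound\<close>

text \<open>Swapping the next card \<open>g\<close> with a non-\<open>g\<close> card at an open position
  injects pairs (deck with next card \<open>g\<close>, open position without \<open>g\<close>) into pairs
  (deck with next card not \<open>g\<close>, open position with \<open>g\<close>).\<close>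

lemma card_swap_pairs_le:
  assumes len: "length h < m * n"
  shows "card (SIGMA \<sigma>:{\<sigma> \<in> consistent_decks m n G h. \<sigma> ! length h = g}.
               {s \<in> open_positions m n g h. \<sigma> ! s \<noteq> g})
       \<le> card (SIGMA \<sigma>:{\<sigma> \<in> consistent_decks m n G h. \<sigma> ! length h \<noteq> g}.
               {s \<in> open_positions m n g h. \<sigma> ! s = g})"
    (is "card ?P \<le> card ?Q")
proof -
  let ?C = "consistent_decks m n G h" and ?O = "open_positions m n g h" and ?t = "length h"
  define f where "f = (\<lambda>(\<sigma> :: nat list, s). (swap_at s ?t \<sigma>, s))"
  have lens: "s < length \<sigma>" "?t < length \<sigma>" if "\<sigma> \<in> ?C" "s \<in> ?O" for \<sigma> s
    using that len by (auto simp: consistent_decks_def open_positions_def decks_length)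
  have "inj_on f ?P"
  proof (rule inj_onI)
    fix x y assume "x \<in> ?P" "y \<in> ?P" "f x = f y"
    then obtain \<sigma> \<tau> s where "x = (\<sigma>, s)" "y = (\<tau>, s)" "swap_at s ?t \<sigma> = swap_at s ?t \<tau>"
      and "\<sigma> \<in> ?C" "\<tau> \<in> ?C" "s \<in> ?O"
      by (auto simp: f_def)
    then show "x = y"
      using lens by (metis swap_at_swap_at)
  qed
  moreover have "f ` ?P \<subseteq> ?Q"
    using lens by (auto simp: f_def nth_swap_at intro: swap_at_consistent[OF _ len])
  moreover have "finite ?Q"
    using finite_decks by (auto simp: consistent_decks_def)
  ultimately show ?thesis
    by (rule card_inj_on_le)
qed

lemma posterior_hit_count:
  assumes len: "length h < m * n" and g: "g < n"
  shows "card {\<sigma> \<in> consistent_decks m n G h. \<sigma> ! length h = g} * card (open_positions m n g h)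
     \<le> card (consistent_decks m n G h) * (m - hits g h)"
proof -
  let ?C = "consistent_decks m n G h" and ?O = "open_positions m n g h" and ?t = "length h"
  let ?A = "{\<sigma> \<in> ?C. \<sigma> ! ?t = g}" and ?B = "{\<sigma> \<in> ?C. \<sigma> ! ?t \<noteq> g}"
  have fin: "finite ?C" "finite ?O"
    using finite_decks by (auto simp: consistent_decks_def open_positions_def)
  have occ: "card {s \<in> ?O. \<sigma> ! s = g} = m - hits g h" if "\<sigma> \<in> ?C" for \<sigma>
    using card_open_occurrences_add_hits[OF that less_imp_le[OF len], of g] g that
      card_positions_decks[of \<sigma> m n g]
    by (simp add: consistent_decks_def)
  have "card (SIGMA \<sigma>:?A. {s \<in> ?O. \<sigma> ! s \<noteq> g}) + card ?A * (m - hits g h)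
      = (\<Sum>\<sigma>\<in>?A. card {s \<in> ?O. \<sigma> ! s \<noteq> g} + (m - hits g h))"
    using fin by (simp add: sum.distrib)
  also have "\<dots> = (\<Sum>\<sigma>\<in>?A. card ?O)"
  proof (rule sum.cong)
    fix \<sigma> assume "\<sigma> \<in> ?A"
    then show "card {s \<in> ?O. \<sigma> ! s \<noteq> g} + (m - hits g h) = card ?O"
      using occ[of \<sigma>] card_filter_add_card_filter_not[OF fin(2), of "\<lambda>s. \<sigma> ! s = g"] by simp
  qed simp
  finally have "card ?A * card ?O \<le> card ?B * (m - hits g h) + card ?A * (m - hits g h)"
    using card_swap_pairs_le[OF len, of G g] fin occ by simp
  also have "\<dots> = card ?C * (m - hits g h)"
    using card_filter_add_card_filter_not[OF fin(1), of "\<lambda>\<sigma>. \<sigma> ! ?t = g"]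
    by (simp flip: add_mult_distrib)
  finally show ?thesis .
qed

lemma posterior_hit_bound:
  assumes len: "length h < m * n"
  shows "real (card {\<sigma> \<in> consistent_decks m n G h. \<sigma> ! length h = g}) * open_slots m n g h
     \<le> real (card (consistent_decks m n G h)) * (real m - real (hits g h))"
proof (cases "consistent_decks m n G h = {}")
  case False
  then have hits: "hits g h \<le> m"
    using hits_le len by fastforce
  show ?thesis
  proof (cases "g < n")
    case True
    have "real (card {\<sigma> \<in> consistent_decks m n G h. \<sigma> ! length h = g} * card (open_positions m n g h))
        \<le> real (card (consistent_decks m n G h) * (m - hits g h))"
      using posterior_hit_count[OF len True, of G] by (simp only: of_nat_le_iff)
    then show ?thesis
      using card_open_positions[of h m n g] len hits by (simp add: of_nat_diff)
  next
    case False
    then have "{\<sigma> \<in> consistent_decks m n G h. \<sigma> ! length h = g} = {}"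
      using len decks_nth_less by (fastforce simp: consistent_decks_def)
    then have "card {\<sigma> \<in> consistent_decks m n G h. \<sigma> ! length h = g} = 0"
      by (simp only: card.empty)
    then show ?thesis
      using hits by simp
  qed
qed simp

lemma remaining_le_open_slots:
  assumes "\<sigma> \<in> consistent_decks m n G h" "length h < m * n" "g < n"
  shows "real m - real (hits g h) \<le> open_slots m n g h"
proof -
  have "card {s \<in> open_positions m n g h. \<sigma> ! s = g} + hits g h = m"
    using card_open_occurrences_add_hits[OF assms(1)] assms card_positions_decks[of \<sigma> m n g]
    by (simp add: consistent_decks_def)
  moreover have "card {s \<in> open_positions m n g h. \<sigma> ! s = g} \<le> card (open_positions m n g h)"
    by (intro card_mono) auto
  ultimately have "m - hits g h \<le> card (open_positions m n g h)"
    by linarith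
  then show ?thesis
    using card_open_positions[of h m n g] hits_le[OF assms(1)] assms(2) by (simp add: of_nat_diff)
qed

section \<open>Supermartingales along the game\<close>

text \<open>Averaging over \<open>consistent_decks m n G h\<close> is conditional expectation given the
  history \<open>h\<close> for a uniformly random deck.\<close>

definition supermartingale :: "nat \<Rightarrow> nat \<Rightarrow> strategy \<Rightarrow> (history \<Rightarrow> real) \<Rightarrow> bool" where
  "supermartingale m n G F \<longleftrightarrow>
     (\<forall>h. length h < m * n \<longrightarrow> consistent_decks m n G h \<noteq> {} \<longrightarrow>
        (\<Sum>\<sigma>\<in>consistent_decks m n G h. F (hist G \<sigma> (Suc (length h))))
          \<le> real (card (consistent_decks m n G h)) * F h)"

lemma supermartingaleD:
  assumes "supermartingale m n G F" "length h < m * n" "consistent_decks m n G h \<noteq> {}"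
  shows "(\<Sum>\<sigma>\<in>consistent_decks m n G h. F (hist G \<sigma> (Suc (length h))))
      \<le> real (card (consistent_decks m n G h)) * F h"
  using assms unfolding supermartingale_def by blast

lemma supermartingale_sum_le:
  assumes F: "supermartingale m n G F" and L: "L \<le> m * n"
  shows "(\<Sum>\<pi>\<in>decks m n. F (hist G \<pi> L)) \<le> real (card (decks m n)) * F []"
  using assms(2)
proof (induction L)
  case (Suc L)
  let ?H = "\<lambda>\<pi>. hist G \<pi> L"
  have classes: "{\<sigma> \<in> decks m n. ?H \<sigma> = h} = consistent_decks m n G h" if "h \<in> ?H ` decks m n" for h
    using that by (auto simp: consistent_decks_def)
  have "(\<Sum>\<pi>\<in>decks m n. F (hist G \<pi> (Suc L)))
      = (\<Sum>h\<in>?H ` decks m n. \<Sum>\<sigma>\<in>consistent_decks m n G h. F (hist G \<sigma> (Suc L)))"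
    using classes by (simp add: sum.image_gen[OF finite_decks, where g = ?H])
  also have "\<dots> \<le> (\<Sum>h\<in>?H ` decks m n. real (card (consistent_decks m n G h)) * F h)"
  proof (rule sum_mono)
    fix h assume h: "h \<in> ?H ` decks m n"
    then have "length h = L" "consistent_decks m n G h \<noteq> {}"
      using classes by auto
    then show "(\<Sum>\<sigma>\<in>consistent_decks m n G h. F (hist G \<sigma> (Suc L)))
        \<le> real (card (consistent_decks m n G h)) * F h"
      using supermartingaleD[OF F, of h] Suc.prems by simp
  qed
  also have "\<dots> = (\<Sum>h\<in>?H ` decks m n. \<Sum>\<sigma>\<in>consistent_decks m n G h. F (?H \<sigma>))"
    by (intro sum.cong) (auto simp: consistent_decks_def)
  also have "\<dots> = (\<Sum>\<pi>\<in>decks m n. F (?H \<pi>))"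
    using classes by (simp add: sum.image_gen[OF finite_decks, where g = ?H])
  finally show ?case
    using Suc by simp
qed simp

lemma supermartingale_markov:
  assumes F: "supermartingale m n G F" and nonneg: "\<And>h. 0 \<le> F h" and a: "0 < a"
  shows "real (card {\<pi> \<in> decks m n. a \<le> F (full_hist G m n \<pi>)}) \<le> real (card (decks m n)) * F [] / a"
proof -
  have "real (card {\<pi> \<in> decks m n. a \<le> F (full_hist G m n \<pi>)}) * a
      = (\<Sum>\<pi>\<in>{\<pi> \<in> decks m n. a \<le> F (full_hist G m n \<pi>)}. a)"
    by simp
  also have "\<dots> \<le> (\<Sum>\<pi>\<in>{\<pi> \<in> decks m n. a \<le> F (full_hist G m n \<pi>)}. F (full_hist G m n \<pi>))"
    by (rule sum_mono) simp
  also have "\<dots> \<le> (\<Sum>\<pi>\<in>decks m n. F (full_hist G m n \<pi>))"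
    using nonneg finite_decks by (intro sum_mono2) auto
  also have "\<dots> \<le> real (card (decks m n)) * F []"
    unfolding full_hist_def by (rule supermartingale_sum_le[OF F]) simp
  finally show ?thesis
    using a by (simp add: field_simps)
qed

lemma sum_consistent_decks_next:
  "(\<Sum>\<sigma>\<in>consistent_decks m n G h. F (hist G \<sigma> (Suc (length h))))
     = real (card {\<sigma> \<in> consistent_decks m n G h. \<sigma> ! length h = G h}) * F (h @ [(G h, True)])
     + real (card {\<sigma> \<in> consistent_decks m n G h. \<sigma> ! length h \<noteq> G h}) * F (h @ [(G h, False)])"
proof -
  have fin: "finite (consistent_decks m n G h)"
    using finite_decks by (simp add: consistent_decks_def)
  have "(\<Sum>\<sigma>\<in>consistent_decks m n G h. F (hist G \<sigma> (Suc (length h))))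
      = (\<Sum>\<sigma>\<in>consistent_decks m n G h.
           if \<sigma> ! length h = G h then F (h @ [(G h, True)]) else F (h @ [(G h, False)]))"
    by (intro sum.cong) (auto simp: consistent_decks_def)
  then show ?thesis
    using fin by (simp add: sum.If_cases Collect_conj_eq Collect_neg_eq Int_commute)
qed

text \<open>The posterior probability that the next card equals the guess \<open>g\<close> is at most
  \<open>remaining_density m n g h\<close>, so a process that does not increase in expectation under
  this worst-case hit probability is a supermartingale.\<close>

lemma supermartingaleI:
  assumes step: "\<And>h. length h < m * n \<Longrightarrow> consistent_decks m n G h \<noteq> {} \<Longrightarrow>
      F (h @ [(G h, False)]) \<le> F h \<and>
      F (h @ [(G h, False)]) + remaining_density m n (G h) h
        * (F (h @ [(G h, True)]) - F (h @ [(G h, False)])) \<le> F h"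
  shows "supermartingale m n G F"
  unfolding supermartingale_def
proof (intro allI impI)
  fix h assume len: "length h < m * n" and ne: "consistent_decks m n G h \<noteq> {}"
  let ?C = "consistent_decks m n G h"
  let ?A = "{\<sigma> \<in> ?C. \<sigma> ! length h = G h}" and ?B = "{\<sigma> \<in> ?C. \<sigma> ! length h \<noteq> G h}"
  have "card ?A + card ?B = card ?C"
    using finite_decks by (intro card_filter_add_card_filter_not) (simp add: consistent_decks_def)
  moreover have "0 < open_slots m n (G h) h"
  proof -
    have "real (length h) < real m * real n"
      using len by (metis of_nat_less_iff of_nat_mult)
    then show ?thesis
      using open_slots_ge[of m n h "G h"] by simp
  qed
  ultimately have "real (card ?A) \<le> (real (card ?A) + real (card ?B)) * remaining_density m n (G h) h"
    using posterior_hit_bound[OF len, of G "G h"]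
    by (simp add: remaining_density_def field_simps flip: of_nat_add)
  then have "real (card ?A) * F (h @ [(G h, True)]) + real (card ?B) * F (h @ [(G h, False)])
      \<le> (real (card ?A) + real (card ?B)) * F h"
    using step[OF len ne] by (intro weighted_pair_le) auto
  then show "(\<Sum>\<sigma>\<in>?C. F (hist G \<sigma> (Suc (length h)))) \<le> real (card ?C) * F h"
    using \<open>card ?A + card ?B = card ?C\<close> sum_consistent_decks_next[where F = F and G = G and h = h]
    by (simp flip: of_nat_add)
qed

text \<open>\<open>m / (m n - s)\<close> bounds the probability of a correct guess at time \<open>s\<close>.\<close>

definition correct_guess_potential :: "nat \<Rightarrow> nat \<Rightarrow> history \<Rightarrow> real" where
  "correct_guess_potential m n h =
     real (length (filter snd h)) + (\<Sum>s\<in>{length h..<m * n}. real m / (real (m * n) - real s))"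

lemma supermartingale_correct_guess_potential:
  "supermartingale m n G (correct_guess_potential m n)"
proof (rule supermartingaleI)
  fix h :: history assume len: "length h < m * n"
  let ?d = "real m / (real (m * n) - real (length h))" and ?g = "G h"
  have "real (length h) < real (m * n)"
    using len by (simp only: of_nat_less_iff)
  then have pos: "0 < real (m * n) - real (length h)"
    by simp
  have snoc: "correct_guess_potential m n (h @ [(?g, b)])
      = correct_guess_potential m n h - ?d + (if b then 1 else 0)" for b
    using len by (simp add: correct_guess_potential_def sum.atLeast_Suc_lessThan)
  have "remaining_density m n ?g h \<le> real m / open_slots m n ?g h"
    using open_slots_ge[of m n h ?g] pos
    unfolding remaining_density_def by (intro divide_right_mono) auto
  also have "\<dots> \<le> ?d"
    using open_slots_ge[of m n h ?g] pos by (intro divide_left_mono) auto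
  finally show "correct_guess_potential m n (h @ [(?g, False)]) \<le> correct_guess_potential m n h \<and>
      correct_guess_potential m n (h @ [(?g, False)]) + remaining_density m n ?g h *
        (correct_guess_potential m n (h @ [(?g, True)]) - correct_guess_potential m n (h @ [(?g, False)]))
      \<le> correct_guess_potential m n h"
    using pos by (simp add: snoc)
qed

lemma correct_guess_potential_Nil: "correct_guess_potential m n [] = real m * harm (m * n)"
proof -
  have "correct_guess_potential m n [] = (\<Sum>s<m * n. real m * (1 / (real (m * n) - real s)))"
    by (simp add: correct_guess_potential_def atLeast0LessThan)
  also have "\<dots> = real m * harm (m * n)"
    by (simp only: sum_inverse_diff_eq_harm flip: sum_distrib_left)
  finally show ?thesis .
qed

lemma correct_guess_potential_full:
  "correct_guess_potential m n (full_hist G m n \<pi>) = real (length (filter snd (full_hist G m n \<pi>)))"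
  by (simp add: correct_guess_potential_def full_hist_def)

lemma correct_guess_potential_nonneg: "0 \<le> correct_guess_potential m n h"
  unfolding correct_guess_potential_def
  by (intro add_nonneg_nonneg sum_nonneg divide_nonneg_nonneg) (auto simp del: of_nat_mult)

lemma card_many_correct_guesses_le:
  assumes \<rho>: "0 < \<rho>" and mn: "1 \<le> m" "1 \<le> n"
  shows "real (card {\<pi> \<in> decks m n. \<rho> \<le> real (length (filter snd (full_hist G m n \<pi>)))})
    \<le> real (card (decks m n)) * (real m * (ln (real m * real n) + 1)) / \<rho>"
proof -
  have "real (card {\<pi> \<in> decks m n. \<rho> \<le> real (length (filter snd (full_hist G m n \<pi>)))})
      \<le> real (card (decks m n)) * (real m * harm (m * n)) / \<rho>"
    using supermartingale_markov[OF supermartingale_correct_guess_potential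
        correct_guess_potential_nonneg \<rho>]
    by (simp add: correct_guess_potential_Nil correct_guess_potential_full)
  also have "\<dots> \<le> real (card (decks m n)) * (real m * (ln (real m * real n) + 1)) / \<rho>"
    using euler_mascheroni_sequence_decreasing[of 1 "m * n"] mn \<rho>
    by (intro divide_right_mono mult_left_mono) (auto simp: harm_def)
  finally show ?thesis .
qed

section \<open>The exponential supermartingale\<close>

text \<open>One step of the exponential supermartingale when the guess is \<open>i\<close>: the density
  \<open>r/U\<close> moves to \<open>r/(U-1)\<close> on a miss and to \<open>(r-1)/(U-1)\<close> on a hit, and
  the drift \<open>-\<theta>\<close> times this change has mean zero under hit probability \<open>r/U\<close>.\<close>

lemma exp_density_step_le:
  fixes r U \<theta> B :: real
  assumes r: "0 \<le> r" "r \<le> U" and U: "1 < U" and \<theta>: "0 \<le> \<theta>" "\<theta> \<le> U - 1"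
    and B: "2 * \<theta>\<^sup>2 * r / (U * (U - 1)\<^sup>2) \<le> B"
  shows "(1 - r / U) * exp (- \<theta> * (r / (U - 1) - r / U) - B)
       + r / U * exp (- \<theta> * ((r - 1) / (U - 1) - r / U) - B) \<le> 1"
proof -
  define q x y where "q = r / U" and "x = \<theta> * r / (U * (U - 1))"
    and "y = \<theta> * (U - r) / (U * (U - 1))"
  have q: "0 \<le> q" "q \<le> 1" and ratio: "\<theta> / (U - 1) \<le> 1"
    using r U \<theta> by (auto simp: q_def)
  have x: "0 \<le> x" "x \<le> 1" and y: "0 \<le> y" "y \<le> 1"
    using r U \<theta> mult_mono[OF ratio q(2)] mult_mono[OF ratio, of "(U - r) / U" 1]
      mult_left_mono[OF r(2) \<theta>(1)]
    by (auto simp: q_def x_def y_def field_simps)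
  define K where "K = \<theta>\<^sup>2 * r / (U * (U - 1)\<^sup>2)"
  have K: "0 \<le> K" "2 * K \<le> B"
    using r U B by (simp_all add: K_def)
  have "(1 - q) * x\<^sup>2 \<le> x\<^sup>2"
    using q by (simp add: mult_left_le_one_le)
  also have "x\<^sup>2 = K * q"
    using U by (simp add: K_def x_def q_def field_simps power2_eq_square)
  also have "\<dots> \<le> K"
    using K q by (simp add: mult_left_le)
  finally have x2: "(1 - q) * x\<^sup>2 \<le> K" .
  have "q * y\<^sup>2 = K * ((U - r) / U)\<^sup>2"
    using U by (simp add: K_def y_def q_def field_simps power2_eq_square)
  also have "\<dots> \<le> K"
    using r U K by (intro mult_left_le power_le_one) auto
  finally have y2: "q * y\<^sup>2 \<le> K" .
  have "q * y = (1 - q) * x"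
    using U by (simp add: q_def x_def y_def field_simps)
  then have "(1 - q) * exp (- x) + q * exp y \<le> exp ((1 - q) * x\<^sup>2 + q * y\<^sup>2)"
    by (rule exp_two_point_le[OF q x y])
  also have "\<dots> \<le> exp B"
    using x2 y2 K by simp
  finally have main: "(1 - q) * exp (- x) + q * exp y \<le> exp B" .
  have miss: "- \<theta> * (r / (U - 1) - r / U) = - x" and hit: "- \<theta> * ((r - 1) / (U - 1) - r / U) = y"
    using U by (simp_all add: x_def y_def field_simps)
  have "(1 - r / U) * exp (- \<theta> * (r / (U - 1) - r / U) - B)
      + r / U * exp (- \<theta> * ((r - 1) / (U - 1) - r / U) - B)
      = ((1 - q) * exp (- x) + q * exp y) / exp B"
    unfolding miss hit by (simp add: q_def exp_diff add_divide_distrib)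
  also have "\<dots> \<le> 1"
    using main by simp
  finally show ?thesis .
qed

lemma remaining_density_snoc:
  "remaining_density m n i (h @ [(g, b)])
     = (real m - real (hits i h) - (if g = i \<and> b then 1 else 0))
       / (open_slots m n i h - (if g = i \<or> b then 1 else 0))"
  by (auto simp: remaining_density_def open_slots_def algebra_simps)

locale drift_process =
  fixes m n i :: nat and \<epsilon> \<rho> \<theta> \<beta> :: real
begin

text \<open>\<open>exp (drift h)\<close> is the exponential supermartingale for card type \<open>i\<close>; the charge
  \<open>\<theta>\<^sup>2 \<beta>\<close> per guess of \<open>i\<close> absorbs the quadratic term of \<open>exp\<close>.\<close>

definition active :: "history \<Rightarrow> bool" where
  "active h \<longleftrightarrow> \<epsilon> * m * n \<le> guess_count i h \<and> guess_count i h < (1 - \<epsilon>) * m * n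
     \<and> other_hits i h \<le> \<rho>"

definition drift_increment :: "history \<Rightarrow> nat \<times> bool \<Rightarrow> real" where
  "drift_increment h x =
     (if active h
      then - \<theta> * (remaining_density m n i (h @ [x]) - remaining_density m n i h)
           - (if fst x = i then \<theta>\<^sup>2 * \<beta> else 0)
      else 0)"

definition drift :: "history \<Rightarrow> real" where
  "drift h = (\<Sum>s<length h. drift_increment (take s h) (h ! s))"

lemma drift_Nil [simp]: "drift [] = 0"
  by (simp add: drift_def)

lemma drift_snoc [simp]: "drift (h @ [x]) = drift h + drift_increment h x"
  by (simp add: drift_def nth_append)

lemma supermartingale_exp_driftI:
  assumes step: "\<And>h. length h < m * n \<Longrightarrow> consistent_decks m n G h \<noteq> {} \<Longrightarrow>
      drift_increment h (G h, False) \<le> 0 \<and>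
      (1 - remaining_density m n (G h) h) * exp (drift_increment h (G h, False))
        + remaining_density m n (G h) h * exp (drift_increment h (G h, True)) \<le> 1"
  shows "supermartingale m n G (\<lambda>h. exp (drift h))"
proof (rule supermartingaleI)
  fix h assume "length h < m * n" "consistent_decks m n G h \<noteq> {}"
  note step = step[OF this]
  let ?p = "remaining_density m n (G h) h"
  let ?wF = "drift_increment h (G h, False)" and ?wT = "drift_increment h (G h, True)"
  have "exp (drift h + ?wF) + ?p * (exp (drift h + ?wT) - exp (drift h + ?wF))
      = exp (drift h) * ((1 - ?p) * exp ?wF + ?p * exp ?wT)"
    by (simp add: exp_add algebra_simps)
  also have "\<dots> \<le> exp (drift h)"
    using step by (simp add: mult_left_le)
  finally show "exp (drift (h @ [(G h, False)])) \<le> exp (drift h) \<and>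
      exp (drift (h @ [(G h, False)])) + ?p * (exp (drift (h @ [(G h, True)])) - exp (drift (h @ [(G h, False)])))
      \<le> exp (drift h)"
    using step by simp
qed

lemma active_open_slots_gt:
  "active h \<Longrightarrow> \<epsilon> * m * n - \<rho> < open_slots m n i h"
  by (auto simp: active_def open_slots_def algebra_simps)

lemma drift_increments_other_guess:
  assumes "g \<noteq> i" "0 \<le> \<theta>" "0 \<le> real m - real (hits i h)" "1 < \<epsilon> * m * n - \<rho>"
  shows "drift_increment h (g, False) = 0" "drift_increment h (g, True) \<le> 0"
proof -
  let ?r = "real m - real (hits i h)" and ?U = "open_slots m n i h"
  have D: "remaining_density m n i h = ?r / ?U"
    by (simp add: remaining_density_def)
  show "drift_increment h (g, False) = 0"
    using assms(1) by (simp add: drift_increment_def remaining_density_snoc D)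
  show "drift_increment h (g, True) \<le> 0"
  proof (cases "active h")
    case True
    then have "1 < ?U"
      using assms(4) active_open_slots_gt by fastforce
    then have "?r / ?U \<le> ?r / (?U - 1)"
      using assms(3) by (intro divide_left_mono) auto
    then show ?thesis
      using True assms(1,2) by (simp add: drift_increment_def remaining_density_snoc D)
  qed (simp add: drift_increment_def)
qed

lemma drift_increments_same_guess:
  assumes act: "active h" and r: "0 \<le> real m - real (hits i h)" "real m - real (hits i h) \<le> open_slots m n i h"
    and \<theta>: "0 \<le> \<theta>" "\<theta> \<le> \<epsilon> * m * n - \<rho> - 1" and V: "1 < \<epsilon> * m * n - \<rho>"
    and \<beta>: "2 * m / ((\<epsilon> * m * n - \<rho>) * (\<epsilon> * m * n - \<rho> - 1)\<^sup>2) \<le> \<beta>"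
  shows "drift_increment h (i, False) \<le> 0"
    and "(1 - remaining_density m n i h) * exp (drift_increment h (i, False))
       + remaining_density m n i h * exp (drift_increment h (i, True)) \<le> 1"
proof -
  let ?V = "\<epsilon> * m * n - \<rho>" and ?r = "real m - real (hits i h)" and ?U = "open_slots m n i h"
  have D: "remaining_density m n i h = ?r / ?U"
    by (simp add: remaining_density_def)
  have U: "?V < ?U"
    using act by (rule active_open_slots_gt)
  have "?V * (?V - 1)\<^sup>2 \<le> ?U * (?U - 1)\<^sup>2"
    using U V by (intro mult_mono power_mono) auto
  then have "2 * ?r / (?U * (?U - 1)\<^sup>2) \<le> 2 * m / (?V * (?V - 1)\<^sup>2)"
    using r V by (intro frac_le) auto
  then have "\<theta>\<^sup>2 * (2 * ?r / (?U * (?U - 1)\<^sup>2)) \<le> \<theta>\<^sup>2 * \<beta>"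
    using \<beta> by (intro mult_left_mono) auto
  then have B: "2 * \<theta>\<^sup>2 * ?r / (?U * (?U - 1)\<^sup>2) \<le> \<theta>\<^sup>2 * \<beta>"
    by (simp only: times_divide_eq_right ac_simps)
  have "0 \<le> 2 * m / (?V * (?V - 1)\<^sup>2)"
    using V by simp
  then have "0 \<le> \<theta>\<^sup>2 * \<beta>"
    using \<beta> by simp
  moreover have "?r / ?U \<le> ?r / (?U - 1)"
    using r U V by (intro divide_left_mono) auto
  then have "0 \<le> \<theta> * (?r / (?U - 1) - ?r / ?U)"
    using \<theta> by simp
  ultimately show "drift_increment h (i, False) \<le> 0"
    using act by (simp add: drift_increment_def remaining_density_snoc D)
  show "(1 - remaining_density m n i h) * exp (drift_increment h (i, False))
      + remaining_density m n i h * exp (drift_increment h (i, True)) \<le> 1"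
    using exp_density_step_le[OF r _ \<theta>(1) _ B] act U V \<theta>(2)
    by (simp add: drift_increment_def remaining_density_snoc D)
qed

lemma supermartingale_exp_drift:
  assumes i: "i < n" and \<theta>: "0 \<le> \<theta>" "\<theta> \<le> \<epsilon> * m * n - \<rho> - 1" and V: "1 < \<epsilon> * m * n - \<rho>"
    and \<beta>: "2 * m / ((\<epsilon> * m * n - \<rho>) * (\<epsilon> * m * n - \<rho> - 1)\<^sup>2) \<le> \<beta>"
  shows "supermartingale m n G (\<lambda>h. exp (drift h))"
proof (rule supermartingale_exp_driftI)
  fix h assume len: "length h < m * n" and "consistent_decks m n G h \<noteq> {}"
  then obtain \<sigma> where \<sigma>: "\<sigma> \<in> consistent_decks m n G h" by auto
  let ?g = "G h" and ?p = "remaining_density m n (G h) h"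
  have r: "0 \<le> real m - real (hits i h)"
    using hits_le[OF \<sigma>] len by simp
  show "drift_increment h (?g, False) \<le> 0 \<and>
      (1 - ?p) * exp (drift_increment h (?g, False)) + ?p * exp (drift_increment h (?g, True)) \<le> 1"
  proof (cases "?g = i")
    case True
    then show ?thesis
    proof (cases "active h")
      case act: True
      show ?thesis
        using drift_increments_same_guess[OF act r remaining_le_open_slots[OF \<sigma> len i] \<theta> V \<beta>] True
        by simp
    qed (simp add: drift_increment_def)
  next
    case False
    have "real (length h) < real m * real n"
      using len by (metis of_nat_less_iff of_nat_mult)
    then have "0 \<le> ?p"
      using hits_le[OF \<sigma>, of ?g] len open_slots_ge[of m n h ?g]
      by (simp add: remaining_density_def)
    then show ?thesis
      using drift_increments_other_guess[OF False \<theta>(1) r V]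
        mult_left_le[of "exp (drift_increment h (?g, True))" ?p]
      by simp
  qed
qed

lemma card_large_drift_le:
  assumes "i < n" "0 \<le> \<theta>" "\<theta> \<le> \<epsilon> * m * n - \<rho> - 1" "1 < \<epsilon> * m * n - \<rho>"
    and "2 * m / ((\<epsilon> * m * n - \<rho>) * (\<epsilon> * m * n - \<rho> - 1)\<^sup>2) \<le> \<beta>"
  shows "real (card {\<pi> \<in> decks m n. x \<le> drift (full_hist G m n \<pi>)}) \<le> real (card (decks m n)) * exp (- x)"
proof -
  from supermartingale_markov[OF supermartingale_exp_drift[OF assms] exp_ge_zero exp_gt_zero, of x]
  have "real (card {\<pi> \<in> decks m n. x \<le> drift (full_hist G m n \<pi>)}) \<le> real (card (decks m n)) * exp (drift []) / exp x"
    by simp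
  also have "\<dots> = real (card (decks m n)) * exp (- x)"
    by (simp add: exp_minus inverse_eq_divide)
  finally show ?thesis .
qed

end

section \<open>The critical window\<close>

definition critical_window :: "real \<Rightarrow> nat \<Rightarrow> nat \<Rightarrow> nat \<Rightarrow> history \<Rightarrow> nat set" where
  "critical_window \<epsilon> m n i h = {s. s < length h \<and>
     \<epsilon> * real m * real n \<le> real (guess_count i (take s h)) \<and>
     real (guess_count i (take s h)) < (1 - \<epsilon>) * real m * real n}"

lemma critical_iff: "critical \<epsilon> m n i h t \<longleftrightarrow> t \<in> critical_window \<epsilon> m n i h \<and> fst (h ! t) = i"
  by (auto simp: critical_def critical_window_def)

lemma finite_critical [simp]: "finite {t. critical \<epsilon> m n i h t}"
  by (rule finite_subset[of _ "{..<length h}"]) (auto simp: critical_def)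

lemma critical_window_interval:
  fixes \<epsilon> :: real
  assumes "critical_window \<epsilon> m n i h \<noteq> {}"
  defines "lo \<equiv> Min (critical_window \<epsilon> m n i h)" and "hi \<equiv> Max (critical_window \<epsilon> m n i h)"
  shows "critical_window \<epsilon> m n i h = {lo..hi}" "lo \<le> hi"
proof -
  have "mono (\<lambda>s. real (guess_count i (take s h)))"
    by (auto intro!: monoI simp: guess_count_def length_filter_take_mono)
  then show "critical_window \<epsilon> m n i h = {lo..hi}"
    unfolding lo_def hi_def using assms(1)
    by (intro mono_window_eq_interval[where L = "length h"]) (auto simp: critical_window_def)
  then show "lo \<le> hi"
    using assms(1) by auto
qed

lemma critical_window_bounds:
  fixes \<epsilon> :: real
  assumes J: "critical_window \<epsilon> m n i h = {lo..hi}" "lo \<le> hi" and pos: "0 < \<epsilon> * m * n"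
  shows "real (guess_count i (take lo h)) < \<epsilon> * m * n + 1"
    and "real (guess_count i (take (Suc hi) h)) < (1 - \<epsilon>) * m * n + 1"
    and "hi < length h"
proof -
  have lo: "lo \<in> critical_window \<epsilon> m n i h" and hi: "hi \<in> critical_window \<epsilon> m n i h"
    using J by auto
  then show "hi < length h"
    by (simp add: critical_window_def)
  have step: "guess_count i (take (Suc s) h) \<le> guess_count i (take s h) + 1" for s
    unfolding guess_count_def by (rule length_filter_take_Suc_le)
  show "real (guess_count i (take (Suc hi) h)) < (1 - \<epsilon>) * m * n + 1"
    using hi step[of hi] by (simp add: critical_window_def)
  have "0 < lo"
    using lo pos by (auto simp: critical_window_def guess_count_def intro: gr0I)
  moreover have "lo - 1 \<notin> critical_window \<epsilon> m n i h"
    using J \<open>0 < lo\<close> by auto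
  moreover have "guess_count i (take (lo - 1) h) \<le> guess_count i (take lo h)"
    by (simp add: guess_count_def length_filter_take_mono)
  ultimately have "real (guess_count i (take (lo - 1) h)) < \<epsilon> * m * n"
    using lo by (auto simp: critical_window_def)
  then show "real (guess_count i (take lo h)) < \<epsilon> * m * n + 1"
    using step[of "lo - 1"] \<open>0 < lo\<close> by simp
qed

lemma critical_counts_interval:
  assumes J: "critical_window \<epsilon> m n i h = {lo..hi}" "lo \<le> hi"
  shows "b_crit \<epsilon> m n i h + guess_count i (take lo h) = guess_count i (take (Suc hi) h)"
    and "Y_crit \<epsilon> m n i h + hits i (take lo h) = hits i (take (Suc hi) h)"
proof -
  have "hi \<in> critical_window \<epsilon> m n i h"
    using J by simp
  then have hi: "hi < length h"
    by (simp add: critical_window_def)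
  have "{t. critical \<epsilon> m n i h t} = {s \<in> {lo..hi}. fst (h ! s) = i}"
    using J by (auto simp: critical_iff)
  then show "b_crit \<epsilon> m n i h + guess_count i (take lo h) = guess_count i (take (Suc hi) h)"
    using card_filter_interval[of lo hi h "\<lambda>x. fst x = i"] J hi
    by (simp add: b_crit_def guess_count_def case_prod_unfold)
  have "{t. critical \<epsilon> m n i h t \<and> snd (h ! t)} = {s \<in> {lo..hi}. h ! s = (i, True)}"
    using J by (auto simp: critical_iff prod_eq_iff)
  then show "Y_crit \<epsilon> m n i h + hits i (take lo h) = hits i (take (Suc hi) h)"
    using card_filter_interval[of lo hi h "\<lambda>x. x = (i, True)"] J hi
    by (simp add: Y_crit_def hits_def)
qed

lemma critical_window_nonempty:
  fixes \<epsilon> :: real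
  assumes excess: "(1 + 4 * \<epsilon>) * b_crit \<epsilon> m n i h / n + \<epsilon>\<^sup>2 * m < Y_crit \<epsilon> m n i h"
  shows "critical_window \<epsilon> m n i h \<noteq> {}"
proof -
  have Y_le_b: "Y_crit \<epsilon> m n i h \<le> b_crit \<epsilon> m n i h"
    unfolding Y_crit_def b_crit_def by (intro card_mono) auto
  have "b_crit \<epsilon> m n i h \<noteq> 0"
  proof
    assume "b_crit \<epsilon> m n i h = 0"
    then have "\<epsilon>\<^sup>2 * m < 0"
      using excess Y_le_b by simp
    then show False
      by (simp add: mult_less_0_iff)
  qed
  then show ?thesis
    by (auto simp: b_crit_def critical_iff)
qed

lemma slots_at_window_start:
  fixes \<epsilon> N a R :: real
  assumes \<epsilon>: "0 < \<epsilon>" "\<epsilon> \<le> 1/4" and N: "8 \<le> \<epsilon> * N"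
    and a: "a < \<epsilon> * N + 1" and R: "R \<le> \<epsilon>\<^sup>2 / 8 * N"
  shows "N \<le> (1 + 2 * \<epsilon>) * (N - a - R)"
proof -
  have "\<epsilon>\<^sup>2 \<le> \<epsilon> / 4"
    using \<epsilon> by (simp add: power2_eq_square mult_left_mono)
  moreover have "\<epsilon>\<^sup>2 * \<epsilon> \<le> \<epsilon> / 16"
    using \<epsilon> mult_mono[of \<epsilon> "1/4" \<epsilon> "1/4"] by (simp add: power2_eq_square mult_left_mono)
  ultimately have key: "\<epsilon> / 4 \<le> \<epsilon> - 2 * \<epsilon>\<^sup>2 - \<epsilon>\<^sup>2 / 8 - \<epsilon>\<^sup>2 * \<epsilon> / 4"
    using \<epsilon> by linarith
  have "0 < N"
    using N \<epsilon> zero_less_mult_pos[of \<epsilon> N] by simp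
  then have "N * (\<epsilon> / 4) \<le> N * (\<epsilon> - 2 * \<epsilon>\<^sup>2 - \<epsilon>\<^sup>2 / 8 - \<epsilon>\<^sup>2 * \<epsilon> / 4)"
    using key by (intro mult_left_mono) auto
  moreover have "(1 + 2 * \<epsilon>) * (N * (1 - \<epsilon> - \<epsilon>\<^sup>2 / 8) - 1)
      = N + N * (\<epsilon> - 2 * \<epsilon>\<^sup>2 - \<epsilon>\<^sup>2 / 8 - \<epsilon>\<^sup>2 * \<epsilon> / 4) - (1 + 2 * \<epsilon>)"
    by (simp add: algebra_simps power2_eq_square)
  moreover have "(1 + 2 * \<epsilon>) * (N * (1 - \<epsilon> - \<epsilon>\<^sup>2 / 8) - 1) \<le> (1 + 2 * \<epsilon>) * (N - a - R)"
    using a R \<epsilon> by (intro mult_left_mono) (auto simp: algebra_simps)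
  ultimately show ?thesis
    using N \<epsilon> by (simp add: algebra_simps)
qed

lemma density_at_window_start:
  fixes \<epsilon> m n a R k :: real
  assumes \<epsilon>: "0 < \<epsilon>" "\<epsilon> \<le> 1/4" and mn: "1 \<le> m" "1 \<le> n" "8 \<le> \<epsilon> * m * n"
    and a: "a < \<epsilon> * m * n + 1" and R: "R \<le> \<epsilon>\<^sup>2 / 8 * m * n" and k: "0 \<le> k"
  shows "0 < m * n - a - R" and "(m - k) / (m * n - a - R) \<le> (1 + 2 * \<epsilon>) / n"
proof -
  have big: "m * n \<le> (1 + 2 * \<epsilon>) * (m * n - a - R)"
    using slots_at_window_start[OF \<epsilon>, of "m * n" a R] mn a R by (simp add: mult.assoc)
  moreover have "0 < m * n"
    using mn by simp
  ultimately show pos: "0 < m * n - a - R"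
    using \<epsilon> by (smt (verit, best) mult_nonneg_nonpos)
  have "(m - k) / (m * n - a - R) \<le> m / (m * n - a - R)"
    using k pos by (simp add: divide_right_mono)
  also have "\<dots> \<le> (1 + 2 * \<epsilon>) / n"
    using big pos mn by (simp add: field_simps mult.commute)
  finally show "(m - k) / (m * n - a - R) \<le> (1 + 2 * \<epsilon>) / n" .
qed

lemma slots_at_window_end:
  fixes \<epsilon> m n a R :: real
  assumes \<epsilon>: "0 < \<epsilon>" "\<epsilon> \<le> 1/4" and mn: "1 \<le> m" "1 \<le> n" "8 \<le> \<epsilon> * m * n"
    and a: "0 \<le> a" "a < (1 - \<epsilon>) * m * n + 1" and R: "0 \<le> R" "R \<le> \<epsilon>\<^sup>2 / 8 * m * n"
  shows "0 < m * n - a - R" and "m * n - a - R \<le> m * n"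
proof -
  have "\<epsilon>\<^sup>2 \<le> \<epsilon> / 4"
    using \<epsilon> by (simp add: power2_eq_square mult_left_mono)
  then have "\<epsilon>\<^sup>2 / 8 * m * n \<le> \<epsilon> / 32 * (m * n)"
    using mn mult_right_mono[of "\<epsilon>\<^sup>2" "\<epsilon> / 4" "m * n"] by simp
  then have "a + R < (1 - \<epsilon>) * m * n + 1 + \<epsilon> / 32 * (m * n)"
    using a R by linarith
  also have "\<dots> \<le> m * n"
    using mn by (simp add: algebra_simps)
  finally show "0 < m * n - a - R" "m * n - a - R \<le> m * n"
    using a R by simp_all
qed

text \<open>The key identity is
  \<open>(k1 - k0) - D0 (a1 - a0) = U1 (D0 - D1) + D0 (R1 - R0)\<close> with \<open>Dj = (m - kj) / Uj\<close>;
  at the start of the window \<open>D0 \<le> (1 + 2 \<epsilon>) / n\<close>, so an excess of hits forces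
  the density to drop.\<close>

lemma density_drop_ge:
  fixes \<epsilon> m n a0 a1 k0 k1 R0 R1 :: real
  assumes \<epsilon>: "0 < \<epsilon>" "\<epsilon> \<le> 1/4" and mn: "1 \<le> m" "1 \<le> n" "8 \<le> \<epsilon> * m * n"
    and a: "0 \<le> a0" "a0 < \<epsilon> * m * n + 1" "a0 \<le> a1" "a1 < (1 - \<epsilon>) * m * n + 1"
    and R: "0 \<le> R0" "R0 \<le> R1" "R1 \<le> \<epsilon>\<^sup>2 / 8 * m * n"
    and k: "0 \<le> k0" "k0 \<le> k1" "k1 \<le> m"
    and excess: "(1 + 4 * \<epsilon>) * (a1 - a0) / n + \<epsilon>\<^sup>2 * m < k1 - k0"
  shows "\<epsilon>\<^sup>2 / (2 * n) \<le> (m - k0) / (m * n - a0 - R0) - (m - k1) / (m * n - a1 - R1)"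
proof -
  define U0 U1 where "U0 = m * n - a0 - R0" and "U1 = m * n - a1 - R1"
  define D0 D1 where "D0 = (m - k0) / U0" and "D1 = (m - k1) / U1"
  have U0: "0 < U0" and D0: "D0 \<le> (1 + 2 * \<epsilon>) / n"
    using density_at_window_start[OF \<epsilon> mn _ _ k(1)] a R by (auto simp: U0_def D0_def)
  have D0_nonneg: "0 \<le> D0"
    using k U0 by (simp add: D0_def)
  have U1: "0 < U1" "U1 \<le> m * n"
    using slots_at_window_end[OF \<epsilon> mn, of a1 R1] a R unfolding U1_def by linarith+
  have "(1 + 2 * \<epsilon>) / n \<le> (1 + 4 * \<epsilon>) / n"
    using \<epsilon> mn by (intro divide_right_mono) auto
  then have "D0 * (a1 - a0) \<le> (1 + 4 * \<epsilon>) / n * (a1 - a0)"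
    using D0 a by (intro mult_right_mono) auto
  moreover have "D0 * (R1 - R0) \<le> (1 + 2 * \<epsilon>) / n * (\<epsilon>\<^sup>2 / 8 * m * n)"
    using D0 D0_nonneg R by (intro mult_mono) auto
  moreover have "(1 + 2 * \<epsilon>) / n * (\<epsilon>\<^sup>2 / 8 * m * n) \<le> \<epsilon>\<^sup>2 * m / 2"
    using \<epsilon> mn by (simp add: field_simps)
  moreover have "(k1 - k0) - D0 * (a1 - a0) = U1 * (D0 - D1) + D0 * (R1 - R0)"
  proof -
    have "D0 * U0 = m - k0" "D1 * U1 = m - k1"
      using U0 U1 by (simp_all add: D0_def D1_def)
    then show ?thesis
      by (simp add: U0_def U1_def algebra_simps)
  qed
  ultimately have "\<epsilon>\<^sup>2 * m / 2 < U1 * (D0 - D1)"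
    using excess by simp
  then have "\<epsilon>\<^sup>2 * m / (2 * U1) < D0 - D1"
    using U1 by (simp add: field_simps)
  moreover have "\<epsilon>\<^sup>2 * m / (2 * (m * n)) \<le> \<epsilon>\<^sup>2 * m / (2 * U1)"
    using U1 mn by (intro divide_left_mono) auto
  moreover have "\<epsilon>\<^sup>2 * m / (2 * (m * n)) = \<epsilon>\<^sup>2 / (2 * n)"
    using mn by simp
  ultimately show ?thesis
    by (simp add: D0_def D1_def U0_def U1_def)
qed

context drift_process
begin

lemma active_take_iff:
  assumes "other_hits i h \<le> \<rho>" "s < length h"
  shows "active (take s h) \<longleftrightarrow> s \<in> critical_window \<epsilon> m n i h"
proof -
  have "other_hits i (take s h) \<le> other_hits i h"
    using length_filter_take_mono[of s "length h" _ h] assms(2) by (simp add: other_hits_def)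
  then show ?thesis
    using assms by (auto simp: active_def critical_window_def)
qed

lemma drift_telescope:
  assumes \<rho>: "other_hits i h \<le> \<rho>" and J: "critical_window \<epsilon> m n i h = {lo..hi}" "lo \<le> hi"
  shows "drift h = \<theta> * (remaining_density m n i (take lo h) - remaining_density m n i (take (Suc hi) h))
      - \<theta>\<^sup>2 * \<beta> * real (b_crit \<epsilon> m n i h)"
proof -
  let ?J = "critical_window \<epsilon> m n i h" and ?D = "\<lambda>s. remaining_density m n i (take s h)"
  let ?c = "\<lambda>s. if fst (h ! s) = i then \<theta>\<^sup>2 * \<beta> else 0"
  let ?f = "\<lambda>s. - \<theta> * (?D (Suc s) - ?D s) - ?c s"
  have "drift h = (\<Sum>s<length h. if s \<in> ?J then ?f s else 0)"
    unfolding drift_def using active_take_iff[OF \<rho>]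
    by (intro sum.cong) (auto simp: drift_increment_def take_Suc_conv_app_nth)
  also have "\<dots> = sum ?f ({..<length h} \<inter> ?J)"
    by (rule sum.inter_restrict[symmetric]) simp
  also have "\<dots> = sum ?f ?J"
    by (rule arg_cong[where f = "sum ?f"]) (auto simp: critical_window_def)
  also have "\<dots> = - \<theta> * (\<Sum>s=lo..hi. ?D (Suc s) - ?D s) - (\<Sum>s\<in>?J. ?c s)"
    by (simp add: sum_subtractf sum_negf flip: sum_distrib_left add: J)
  also have "(\<Sum>s=lo..hi. ?D (Suc s) - ?D s) = ?D (Suc hi) - ?D lo"
    using J(2) by (intro sum_Suc_diff) simp
  also have "(\<Sum>s\<in>?J. ?c s) = \<theta>\<^sup>2 * \<beta> * real (card {s \<in> ?J. fst (h ! s) = i})"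
    using finite_atLeastAtMost[of lo hi] unfolding J(1)[symmetric] by (simp add: sum.If_cases Int_def)
  also have "{s \<in> ?J. fst (h ! s) = i} = {t. critical \<epsilon> m n i h t}"
    by (auto simp: critical_iff)
  finally show ?thesis
    by (simp add: b_crit_def algebra_simps)
qed

lemma drift_ge_of_excess:
  assumes \<epsilon>: "0 < \<epsilon>" "\<epsilon> \<le> 1/4" and mn: "1 \<le> m" "1 \<le> n" "8 \<le> \<epsilon> * m * n"
    and \<rho>: "\<rho> = \<epsilon>\<^sup>2 / 8 * m * n" and \<theta>: "0 \<le> \<theta>" and \<beta>: "0 \<le> \<beta>"
    and h: "length h = m * n" "hits i h \<le> m" "other_hits i h \<le> \<rho>"
    and excess: "(1 + 4 * \<epsilon>) * b_crit \<epsilon> m n i h / n + \<epsilon>\<^sup>2 * m < Y_crit \<epsilon> m n i h"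
  shows "\<theta> * (\<epsilon>\<^sup>2 / (2 * n)) - \<theta>\<^sup>2 * \<beta> * (m * n) \<le> drift h"
proof -
  let ?J = "critical_window \<epsilon> m n i h"
  have "?J \<noteq> {}"
    using excess by (rule critical_window_nonempty)
  then obtain lo hi where J: "?J = {lo..hi}" "lo \<le> hi"
    using critical_window_interval by blast
  have "0 < \<epsilon> * m * n"
    using mn by simp
  note bounds = critical_window_bounds[OF J this]
  let ?a = "\<lambda>s. real (guess_count i (take s h))" and ?k = "\<lambda>s. real (hits i (take s h))"
    and ?R = "\<lambda>s. real (other_hits i (take s h))"
  have mono: "?a lo \<le> ?a (Suc hi)" "?k lo \<le> ?k (Suc hi)" "?R lo \<le> ?R (Suc hi)"
    "?k (Suc hi) \<le> hits i h" "?R (Suc hi) \<le> other_hits i h"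
    using J(2) length_filter_take_mono[of "Suc hi" "length h" _ h] bounds(3)
    by (auto simp: guess_count_def hits_def other_hits_def intro: length_filter_take_mono)
  have counts: "real (b_crit \<epsilon> m n i h) = ?a (Suc hi) - ?a lo" "real (Y_crit \<epsilon> m n i h) = ?k (Suc hi) - ?k lo"
    using critical_counts_interval[OF J] by (simp_all flip: of_nat_add)
  have "\<epsilon>\<^sup>2 / (2 * n) \<le> (m - ?k lo) / (m * n - ?a lo - ?R lo) - (m - ?k (Suc hi)) / (m * n - ?a (Suc hi) - ?R (Suc hi))"
    using density_drop_ge[OF \<epsilon> _ _ mn(3) _ bounds(1) mono(1) bounds(2)] mn mono h \<rho> excess counts
    by simp
  then have "\<theta> * (\<epsilon>\<^sup>2 / (2 * n)) \<le> \<theta> * (remaining_density m n i (take lo h) - remaining_density m n i (take (Suc hi) h))"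
    using \<theta> by (intro mult_left_mono) (simp_all add: remaining_density_def open_slots_def)
  moreover have "{t. critical \<epsilon> m n i h t} \<subseteq> {..<length h}"
    by (auto simp: critical_def)
  then have "b_crit \<epsilon> m n i h \<le> m * n"
    using h(1) card_mono[OF finite_lessThan] by (fastforce simp: b_crit_def)
  then have "\<theta>\<^sup>2 * \<beta> * b_crit \<epsilon> m n i h \<le> \<theta>\<^sup>2 * \<beta> * (m * n)"
    using \<beta> by (intro mult_left_mono) (simp_all flip: of_nat_mult)
  ultimately show ?thesis
    using drift_telescope[OF h(3) J] by simp
qed

end

section \<open>The tail bound\<close>

lemma divide_slack_cube_le:
  fixes x V c :: real
  assumes x: "0 < x" and V: "31 * x / 32 \<le> V" "x / 2 \<le> V - 1" and c: "0 \<le> c"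
  shows "c / (V * (V - 1)\<^sup>2) \<le> c * 8 / x ^ 3"
proof -
  have "x ^ 3 / 8 \<le> (31 * x / 32) * (x / 2)\<^sup>2"
    using x by (simp add: power2_eq_square power3_eq_cube field_simps)
  also have "\<dots> \<le> V * (V - 1)\<^sup>2"
    using V x by (intro mult_mono power_mono) auto
  finally have VV: "x ^ 3 / 8 \<le> V * (V - 1)\<^sup>2" .
  have pos: "0 < x ^ 3 / 8"
    using x by simp
  then have "c / (V * (V - 1)\<^sup>2) \<le> c / (x ^ 3 / 8)"
    using VV c mult_pos_pos[OF order.strict_trans2[OF pos VV] pos] by (intro divide_left_mono) auto
  then show ?thesis
    by simp
qed

lemma drift_parameters:
  fixes \<epsilon> m n :: real
  assumes \<epsilon>: "0 < \<epsilon>" "\<epsilon> \<le> 1/4" and mn: "1 \<le> m" "1 \<le> n" "64 \<le> \<epsilon> * m * n"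
  defines "V \<equiv> \<epsilon> * m * n - \<epsilon>\<^sup>2 / 8 * m * n" and "\<theta> \<equiv> \<epsilon> ^ 5 * m * n / 256"
  shows "1 < V" and "\<theta> \<le> V - 1"
    and "\<epsilon> ^ 7 / 1024 * m \<le> \<theta> * (\<epsilon>\<^sup>2 / (2 * n)) - \<theta>\<^sup>2 * (2 * m / (V * (V - 1)\<^sup>2)) * (m * n)"
proof -
  define x where "x = \<epsilon> * m * n"
  have x: "64 \<le> x" "0 < x"
    using mn by (simp_all add: x_def)
  have "\<epsilon> * x \<le> x / 4"
    using \<epsilon> x by (simp add: mult_right_mono)
  moreover have "V = x - \<epsilon> * x / 8"
    by (simp add: V_def x_def power2_eq_square algebra_simps)
  ultimately have V: "31 * x / 32 \<le> V" "x / 2 \<le> V - 1"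
    using x by linarith+
  then show "1 < V"
    using x by linarith
  have \<theta>_x: "\<theta> = \<epsilon> ^ 4 * x / 256"
    by (simp add: \<theta>_def x_def eval_nat_numeral algebra_simps)
  have "\<epsilon> ^ 4 \<le> 1"
    using \<epsilon> by (simp add: power_le_one)
  then have "\<theta> \<le> x / 2"
    using x by (simp add: \<theta>_x mult_right_mono_neg)
  then show "\<theta> \<le> V - 1"
    using V by linarith
  have "2 * m / (V * (V - 1)\<^sup>2) \<le> 2 * m * 8 / x ^ 3"
    using V x mn by (intro divide_slack_cube_le) auto
  then have "2 * m / (V * (V - 1)\<^sup>2) \<le> 16 * m / x ^ 3"
    by simp
  have "m * n = x / \<epsilon>"
    using \<epsilon> by (simp add: x_def)
  then have "\<theta>\<^sup>2 * (2 * m / (V * (V - 1)\<^sup>2)) * (m * n)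
      = (\<epsilon> ^ 4 * x / 256)\<^sup>2 * (2 * m / (V * (V - 1)\<^sup>2)) * (x / \<epsilon>)"
    by (simp add: \<theta>_x)
  also have "\<dots> \<le> (\<epsilon> ^ 4 * x / 256)\<^sup>2 * (16 * m / x ^ 3) * (x / \<epsilon>)"
    using \<open>2 * m / (V * (V - 1)\<^sup>2) \<le> 16 * m / x ^ 3\<close> \<epsilon> x
    by (intro mult_right_mono mult_left_mono) auto
  also have "\<dots> = \<epsilon> ^ 7 * m / 4096"
    using x \<epsilon> by (simp add: field_simps power2_eq_square power3_eq_cube eval_nat_numeral)
  finally have "\<theta>\<^sup>2 * (2 * m / (V * (V - 1)\<^sup>2)) * (m * n) \<le> \<epsilon> ^ 7 * m / 4096" .
  moreover have "\<theta> * (\<epsilon>\<^sup>2 / (2 * n)) = \<epsilon> ^ 7 * m / 512"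
    using mn by (simp add: \<theta>_def field_simps eval_nat_numeral)
  moreover have "0 \<le> \<epsilon> ^ 7 * m"
    using \<epsilon> mn by simp
  ultimately show "\<epsilon> ^ 7 / 1024 * m \<le> \<theta> * (\<epsilon>\<^sup>2 / (2 * n)) - \<theta>\<^sup>2 * (2 * m / (V * (V - 1)\<^sup>2)) * (m * n)"
    by linarith
qed

context drift_process
begin

lemma many_hits_or_large_drift:
  assumes \<epsilon>: "0 < \<epsilon>" "\<epsilon> \<le> 1/4" and mn: "1 \<le> m" "1 \<le> n" "64 \<le> \<epsilon> * m * n"
    and \<rho>: "\<rho> = \<epsilon>\<^sup>2 / 8 * m * n" and \<theta>: "\<theta> = \<epsilon> ^ 5 * m * n / 256"
    and \<beta>: "\<beta> = 2 * m / ((\<epsilon> * m * n - \<rho>) * (\<epsilon> * m * n - \<rho> - 1)\<^sup>2)"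
    and \<pi>: "\<pi> \<in> decks m n"
    and excess: "(1 + 4 * \<epsilon>) * b_crit \<epsilon> m n i (full_hist G m n \<pi>) / n + \<epsilon>\<^sup>2 * m
      < Y_crit \<epsilon> m n i (full_hist G m n \<pi>)"
  shows "\<rho> \<le> length (filter snd (full_hist G m n \<pi>)) \<or> \<epsilon> ^ 7 / 1024 * m \<le> drift (full_hist G m n \<pi>)"
proof (cases "other_hits i (full_hist G m n \<pi>) \<le> \<rho>")
  case True
  let ?h = "full_hist G m n \<pi>"
  have mnR: "1 \<le> real m" "1 \<le> real n"
    using mn by simp_all
  note params = drift_parameters[OF \<epsilon> mnR mn(3)]
  have "\<pi> \<in> consistent_decks m n G ?h"
    using \<pi> by (simp add: consistent_decks_def full_hist_def)
  then have "hits i ?h \<le> m"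
    by (rule hits_le) (simp add: full_hist_def)
  moreover have "0 \<le> \<beta>"
    using params(1) by (simp add: \<beta> \<rho>)
  ultimately have "\<theta> * (\<epsilon>\<^sup>2 / (2 * n)) - \<theta>\<^sup>2 * \<beta> * (m * n) \<le> drift ?h"
    using drift_ge_of_excess[OF \<epsilon> mn(1,2) _ \<rho>] mn(3) \<epsilon> True excess
    by (simp add: \<theta> full_hist_def)
  then show ?thesis
    using params(3) by (simp add: \<theta> \<beta> \<rho>)
next
  case False
  then show ?thesis
    using other_hits_le_correct[of i "full_hist G m n \<pi>"] by simp
qed

end

definition excess_event :: "real \<Rightarrow> nat \<Rightarrow> nat \<Rightarrow> strategy \<Rightarrow> nat \<Rightarrow> nat list set" where
  "excess_event \<epsilon> m n G i =
     {\<pi>. real (Y_crit \<epsilon> m n i (full_hist G m n \<pi>)) >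
          (1 + 4 * \<epsilon>) * real (b_crit \<epsilon> m n i (full_hist G m n \<pi>)) / real n + \<epsilon>^2 * real m}"

lemma prob_uniform_le_of_cover:
  assumes \<Omega>: "finite \<Omega>" "\<Omega> \<noteq> {}" and cover: "\<Omega> \<inter> S \<subseteq> A \<union> B" "A \<subseteq> \<Omega>" "B \<subseteq> \<Omega>"
    and A: "real (card A) \<le> real (card \<Omega>) * q" and B: "real (card B) \<le> real (card \<Omega>) * q"
  shows "measure_pmf.prob (pmf_of_set \<Omega>) S \<le> 2 * q"
proof -
  have "card (\<Omega> \<inter> S) \<le> card (A \<union> B)"
    using cover \<Omega> by (intro card_mono) (auto intro: finite_subset)
  also have "\<dots> \<le> card A + card B"
    by (rule card_Un_le)
  finally have "real (card (\<Omega> \<inter> S)) \<le> real (card A) + real (card B)"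
    by (metis of_nat_add of_nat_le_iff)
  also have "\<dots> \<le> real (card \<Omega>) * (2 * q)"
    using A B by linarith
  finally have "real (card \<Omega>) * measure_pmf.prob (pmf_of_set \<Omega>) S \<le> real (card \<Omega>) * (2 * q)"
    using measure_pmf_of_set[OF \<Omega>(2,1)] by simp
  moreover have "0 < real (card \<Omega>)"
    using \<Omega> by (simp add: card_gt_0_iff)
  ultimately show ?thesis
    by (rule mult_left_le_imp_le)
qed

lemma prob_excess_event_le:
  fixes \<epsilon> :: real
  assumes \<epsilon>: "0 < \<epsilon>" "\<epsilon> \<le> 1/4" and mn: "1 \<le> m" "64 \<le> \<epsilon> * m * n" and i: "i < n"
    and log_small: "8 * (ln (real m * real n) + 1) / (\<epsilon>\<^sup>2 * n) \<le> exp (- (\<epsilon> ^ 7 / 1024) * m)"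
  shows "measure_pmf.prob (pmf_of_set (decks m n)) (excess_event \<epsilon> m n G i)
    \<le> 2 * exp (- (\<epsilon> ^ 7 / 1024) * m)"
proof -
  define \<rho> where "\<rho> = \<epsilon>\<^sup>2 / 8 * m * n"
  define \<theta> where "\<theta> = \<epsilon> ^ 5 * m * n / 256"
  define \<beta> where "\<beta> = 2 * m / ((\<epsilon> * m * n - \<rho>) * (\<epsilon> * m * n - \<rho> - 1)\<^sup>2)"
  define q where "q = exp (- (\<epsilon> ^ 7 / 1024) * m)"
  interpret drift_process m n i \<epsilon> \<rho> \<theta> \<beta> .
  let ?\<Omega> = "decks m n"
  let ?A1 = "{\<pi> \<in> ?\<Omega>. \<rho> \<le> real (length (filter snd (full_hist G m n \<pi>)))}"
  let ?A2 = "{\<pi> \<in> ?\<Omega>. \<epsilon> ^ 7 / 1024 * m \<le> drift (full_hist G m n \<pi>)}"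
  have n: "1 \<le> n" and mnR: "1 \<le> real m" "1 \<le> real n"
    using i mn by simp_all
  have "0 < \<rho>"
    using \<epsilon> mn n by (simp add: \<rho>_def)
  then have "real (card ?A1) \<le> real (card ?\<Omega>) * (real m * (ln (real m * real n) + 1)) / \<rho>"
    using card_many_correct_guesses_le mn n by blast
  also have "\<dots> = real (card ?\<Omega>) * (8 * (ln (real m * real n) + 1) / (\<epsilon>\<^sup>2 * n))"
    using mn n \<epsilon> by (simp add: \<rho>_def field_simps)
  also have "\<dots> \<le> real (card ?\<Omega>) * q"
    unfolding q_def by (rule mult_left_mono[OF log_small]) simp
  finally have A1: "real (card ?A1) \<le> real (card ?\<Omega>) * q" .
  have "1 < \<epsilon> * m * n - \<rho>" "\<theta> \<le> \<epsilon> * m * n - \<rho> - 1" "0 \<le> \<theta>"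
    using drift_parameters(1,2)[OF \<epsilon> mnR mn(2)] \<epsilon> by (simp_all add: \<rho>_def \<theta>_def)
  from card_large_drift_le[OF i this(3,2,1), where G = G and x = "\<epsilon> ^ 7 / 1024 * m"]
  have A2: "real (card ?A2) \<le> real (card ?\<Omega>) * q"
    by (simp add: q_def \<beta>_def)
  have "?\<Omega> \<inter> excess_event \<epsilon> m n G i \<subseteq> ?A1 \<union> ?A2"
    using many_hits_or_large_drift[OF \<epsilon> mn(1) n mn(2) \<rho>_def \<theta>_def \<beta>_def]
    by (auto simp: excess_event_def)
  from prob_uniform_le_of_cover[OF finite_decks decks_nonempty this _ _ A1 A2]
  show ?thesis
    by (auto simp: q_def)
qed

lemma eventually_log_ratio_le:
  fixes e X :: real
  assumes m: "1 \<le> m" and e: "0 < e" and X: "0 < X"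
  shows "\<exists>N. \<forall>n\<ge>N. 8 * (ln (real m * real n) + 1) / (e\<^sup>2 * real n) \<le> X"
proof -
  have "(\<lambda>n. 8 / e\<^sup>2 * ((ln (real m) + 1) * (1 / real n) + ln (real n) / real n))
      \<longlonglongrightarrow> 8 / e\<^sup>2 * ((ln (real m) + 1) * 0 + 0)"
    by (intro tendsto_intros lim_const_over_n
        filterlim_compose[OF ln_x_over_x_tendsto_0 filterlim_real_sequentially])
  then have "eventually (\<lambda>n. 8 / e\<^sup>2 * ((ln (real m) + 1) * (1 / real n) + ln (real n) / real n) < X)
      sequentially"
    using X by (intro order_tendstoD(2)) auto
  then have "eventually (\<lambda>n. 8 * (ln (real m * real n) + 1) / (e\<^sup>2 * real n) \<le> X) sequentially"
    using eventually_ge_at_top[of 1]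
  proof eventually_elim
    case (elim n)
    then have "ln (real m * real n) = ln (real m) + ln (real n)"
      using m by (simp add: ln_mult)
    then show ?case
      using elim e by (simp add: field_simps)
  qed
  then show ?thesis
    by (simp add: eventually_sequentially)
qed

lemma excess_event_no_cards: "excess_event \<epsilon> 0 n G i = {}"
  by (simp add: excess_event_def Y_crit_def b_crit_def critical_def)

lemma prob_excess_event_eventually_le:
  fixes \<epsilon> :: real
  assumes \<epsilon>: "0 < \<epsilon>" "\<epsilon> \<le> 1/4"
  shows "\<exists>N. \<forall>n\<ge>N. \<forall>G i. i < n \<longrightarrow>
    measure_pmf.prob (pmf_of_set (decks m n)) (excess_event \<epsilon> m n G i) \<le> 2 * exp (- (\<epsilon> ^ 7 / 1024) * m)"
proof (cases "m = 0")
  case False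
  then have m: "1 \<le> m" by simp
  obtain N where N: "\<forall>n\<ge>N. 8 * (ln (real m * real n) + 1) / (\<epsilon>\<^sup>2 * real n) \<le> exp (- (\<epsilon> ^ 7 / 1024) * m)"
    using eventually_log_ratio_le[OF m \<epsilon>(1) exp_gt_zero] by blast
  have "64 \<le> \<epsilon> * m * n" if "64 / \<epsilon> \<le> n" for n :: nat
  proof -
    have "64 \<le> \<epsilon> * n"
      using that \<epsilon> by (simp add: field_simps)
    also have "\<dots> \<le> \<epsilon> * m * n"
      using m \<epsilon> by (simp add: mult_right_mono)
    finally show ?thesis .
  qed
  then show ?thesis
    using N prob_excess_event_le[OF \<epsilon> m] by (intro exI[of _ "max N (nat \<lceil>64 / \<epsilon>\<rceil>)"]) auto
qed (simp add: excess_event_no_cards)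

theorem lemma3p12:
  fixes \<epsilon> :: real
  assumes "0 < \<epsilon>" and "\<epsilon> \<le> 1/4"
  shows "\<exists>c c'. c > 0 \<and> c' > 0 \<and>
    (\<forall>m::nat. \<exists>N::nat. \<forall>n\<ge>N. \<forall>(G::strategy) (i::nat).
       (\<forall>h. G h < n) \<longrightarrow> i < n \<longrightarrow>
       measure_pmf.prob (pmf_of_set (decks m n))
         {\<pi>. real (Y_crit \<epsilon> m n i (full_hist G m n \<pi>)) >
              (1 + 4 * \<epsilon>) * real (b_crit \<epsilon> m n i (full_hist G m n \<pi>)) / real n
              + \<epsilon>^2 * real m}
       \<le> c' * \<epsilon> powr (-2) * exp (- c * \<epsilon>^4 * real m))"
proof -
  let ?c = "\<epsilon> ^ 3 / 1024" and ?c' = "2 * \<epsilon>\<^sup>2"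
  have bound: "?c' * \<epsilon> powr (-2) * exp (- ?c * \<epsilon> ^ 4 * real m) = 2 * exp (- (\<epsilon> ^ 7 / 1024) * real m)"
    for m :: nat
  proof -
    have "?c' * \<epsilon> powr (-2) = 2"
      using assms by (simp add: powr_minus powr_realpow)
    moreover have "- ?c * \<epsilon> ^ 4 = - (\<epsilon> ^ 7 / 1024)"
      by (simp flip: power_add)
    ultimately show ?thesis
      by (simp only:)
  qed
  have "\<forall>m. \<exists>N. \<forall>n\<ge>N. \<forall>(G::strategy) i. (\<forall>h. G h < n) \<longrightarrow> i < n \<longrightarrow>
      measure_pmf.prob (pmf_of_set (decks m n)) (excess_event \<epsilon> m n G i)
        \<le> ?c' * \<epsilon> powr (-2) * exp (- ?c * \<epsilon> ^ 4 * real m)"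
    unfolding bound using prob_excess_event_eventually_le[OF assms] by blast
  moreover have "0 < ?c" "0 < ?c'"
    using assms by simp_all
  ultimately show ?thesis
    unfolding excess_event_def by blast
qed

end
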